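(* Let $p\ge2$ be an integer, $A_1\in GL_{n_1}(\mathbb{C})$, $B_1\in GL_{n_2}(\mathbb{C})$, and let $\widetilde{S_1}$ be an $n_2\times n_1$ matrix whose entries are meromorphic at $\widetilde1=(1,0)\in\widetilde{\mathbb{C}^\star}$. If $\phi_p(\widetilde{S_1})A_1=B_1\widetilde{S_1}$, then the entries of $\widetilde{S_1}$ are Laurent polynomials in $\widetilde{\log}$.
   Context: $\widetilde{\mathbb{C}^\star}=\{(re^{ib},b):r>0,b\in\mathbb{R}\}$ is the universal cover of $\mathbb{C}^\star$, $\widetilde{\log}(re^{ib},b)=\log r+ib$ (a biholomorphism onto $\mathbb{C}$), and $\phi_p(\widetilde{S_1})=\widetilde{S_1}\circ\phi_p$ where $\phi_p(re^{ib},b)=(r^pe^{ipb},pb)$ (which fixes $\widetilde1$). "Meromorphic at $\widetilde1$" means meromorphic on some neighbourhood of $\widetilde1$. *)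

theory Defs
  imports "HOL-Complex_Analysis.Complex_Analysis"
begin

definition univ_cover :: "(complex \<times> real) set" where
  "univ_cover = {(complex_of_real r * cis b, b) | r b. r > 0}"

definition tilde_one :: "complex \<times> real" where
  "tilde_one = (1, 0)"

definition ltilde :: "complex \<times> real \<Rightarrow> complex" where
  "ltilde x = complex_of_real (ln (cmod (fst x))) + \<i> * complex_of_real (snd x)"

text \<open>Inverse of the biholomorphism log~ : univ_cover -> C, w |-> (e^w, Im w);
  it is the chart defining the complex structure of the universal cover.\<close>
definition cover_of :: "complex \<Rightarrow> complex \<times> real" where
  "cover_of w = (exp w, Im w)"

definition phi :: "nat \<Rightarrow> complex \<times> real \<Rightarrow> complex \<times> real" where
  "phi p x = (complex_of_real (cmod (fst x) ^ p) * cis (real p * snd x), real p * snd x)"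

definition meromorphic_at_tilde_one :: "(complex \<times> real \<Rightarrow> complex) \<Rightarrow> bool" where
  "meromorphic_at_tilde_one f \<longleftrightarrow>
     (\<exists>U. open U \<and> ltilde tilde_one \<in> U \<and> (\<lambda>w. f (cover_of w)) meromorphic_on U)"

definition laurent_poly_in_ltilde :: "(complex \<times> real \<Rightarrow> complex) \<Rightarrow> bool" where
  "laurent_poly_in_ltilde f \<longleftrightarrow>
     (\<exists>K :: int set. \<exists>c :: int \<Rightarrow> complex. finite K \<and>
        (\<forall>\<^sub>F w in at (ltilde tilde_one).
            f (cover_of w) = (\<Sum>k\<in>K. c k * ltilde (cover_of w) powi k)))"

end

theory Submission
  imports Defs
begin

text \<open>Through the chart \<open>ltilde\<close>, \<open>\<phi>\<^sub>p\<close> becomes the dilation \<open>w \<mapsto> p w\<close>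
  and \<open>S\<close> becomes a matrix \<open>T\<close> of functions meromorphic at 0 with \<open>T (p w) A = B T w\<close>.
  Comparing Laurent coefficients gives \<open>p\<^sup>n M\<^sub>n = B M\<^sub>n A\<inverse>\<close> for the
  coefficient matrices \<open>M\<^sub>n\<close>. The operator \<open>X \<mapsto> B X A\<inverse>\<close> is bounded, so
  \<open>M\<^sub>n \<noteq> 0\<close> forces \<open>p\<^sup>n\<close> to be bounded, i.e. \<open>n\<close> is bounded above. Together
  with the finite principal part, only finitely many coefficients survive.\<close>

lemma ltilde_tilde_one [simp]: "ltilde tilde_one = 0"
  by (simp add: ltilde_def tilde_one_def)

lemma ltilde_cover_of [simp]: "ltilde (cover_of w) = w"
  by (simp add: ltilde_def cover_of_def complex_eq_iff)

lemma phi_cover_of: "phi p (cover_of w) = cover_of (of_nat p * w)"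
  by (simp add: phi_def cover_of_def exp_eq_polar[of "of_nat p * w"] exp_of_nat_mult[symmetric]
      flip: exp_of_real)

lemma meromorphic_at_tilde_one_imp_has_laurent_expansion:
  assumes "meromorphic_at_tilde_one f"
  shows "\<exists>F. (\<lambda>w. f (cover_of w)) has_laurent_expansion F"
proof -
  obtain U where "0 \<in> U" "(\<lambda>w. f (cover_of w)) meromorphic_on U"
    using assms unfolding meromorphic_at_tilde_one_def by auto
  then show ?thesis
    unfolding meromorphic_on_def by force
qed

lemma has_laurent_expansion_dilate:
  fixes c :: complex
  assumes "f has_laurent_expansion F" "c \<noteq> 0"
  shows "(\<lambda>w. f (c * w)) has_laurent_expansion fls_compose_fps F (fps_const c * fps_X)"
proof -
  have "(\<lambda>w. c * w) has_laurent_expansion fls_const c * fls_X"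
    by (intro laurent_expansion_intros)
  then have "(\<lambda>w. c * w) has_laurent_expansion fps_to_fls (fps_const c * fps_X)"
    by (simp add: fls_times_fps_to_fls)
  from has_laurent_expansion_compose[OF assms(1) this] assms(2)
  show ?thesis
    by (simp add: o_def)
qed

lemma laurent_coeffs_dilation_intertwined:
  fixes T :: "complex \<Rightarrow> complex ^ 'm ^ 'n" and c :: real
  assumes "c \<noteq> 0"
    and expansion: "\<And>i j. (\<lambda>w. T w $ i $ j) has_laurent_expansion F i j"
    and functional_eq: "\<forall>\<^sub>F w in at 0. T (of_real c * w) ** A = B ** T w"
  shows "c powi n *\<^sub>R ((\<chi> i j. fls_nth (F i j) n) ** A) = B ** (\<chi> i j. fls_nth (F i j) n)"
proof -
  have coeff_eq: "(\<Sum>l\<in>UNIV. (fls_nth (F i l) n * of_real c powi n) * A $ l $ j) =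
    (\<Sum>l\<in>UNIV. B $ i $ l * fls_nth (F l j) n)" for i j
  proof -
    let ?G = "fps_const (of_real c) * fps_X :: complex fps"
    have TA: "(\<lambda>w. (T (of_real c * w) ** A) $ i $ j) has_laurent_expansion
        (\<Sum>l\<in>UNIV. fls_compose_fps (F i l) ?G * fls_const (A $ l $ j))"
      unfolding matrix_matrix_mult_def using \<open>c \<noteq> 0\<close>
      by (simp, intro has_laurent_expansion_sum has_laurent_expansion_cmult_right
          has_laurent_expansion_dilate expansion) simp
    have BT: "(\<lambda>w. (B ** T w) $ i $ j) has_laurent_expansion
        (\<Sum>l\<in>UNIV. fls_const (B $ i $ l) * F l j)"
      unfolding matrix_matrix_mult_def
      by (simp, intro has_laurent_expansion_sum has_laurent_expansion_cmult_left expansion)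
    have "\<forall>\<^sub>F w in at 0. (B ** T w) $ i $ j = (T (of_real c * w) ** A) $ i $ j"
      using functional_eq by eventually_elim simp
    from has_laurent_expansion_cong[OF this refl] BT
    have TA': "(\<lambda>w. (T (of_real c * w) ** A) $ i $ j) has_laurent_expansion
        (\<Sum>l\<in>UNIV. fls_const (B $ i $ l) * F l j)"
      by simp
    from arg_cong[OF has_laurent_expansion_unique[OF TA TA'], of "\<lambda>H. fls_nth H n"] \<open>c \<noteq> 0\<close>
    show ?thesis
      by (simp add: fls_nth_sum fls_nth_fls_compose_fps_linear)
  qed
  then show ?thesis
    unfolding vec_eq_iff matrix_matrix_mult_def
    by (simp add: scaleR_sum_right flip: coeff_eq) (simp add: scaleR_conv_of_real algebra_simps)
qed

lemma bounded_linear_matrix_sandwich: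
  fixes B :: "'a :: {real_algebra_1, euclidean_space} ^ 'n ^ 'n" and C :: "'a ^ 'm ^ 'm"
  shows "bounded_linear (\<lambda>X :: 'a ^ 'm ^ 'n. B ** X ** C)"
  unfolding linear_conv_bounded_linear[symmetric]
  by (rule linearI)
    (simp_all add: matrix_matrix_mult_def vec_eq_iff sum.distrib algebra_simps sum_distrib_left
      sum_distrib_right scaleR_sum_right)

lemma scaled_intertwiner_factor_bounded:
  fixes A :: "'a :: {real_algebra_1, euclidean_space, comm_ring_1} ^ 'm ^ 'm"
    and B :: "'a ^ 'n ^ 'n"
  assumes "invertible A"
  obtains K where "\<And>t X. t *\<^sub>R (X ** A) = B ** X \<Longrightarrow> X \<noteq> 0 \<Longrightarrow> \<bar>t\<bar> \<le> K"
proof -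
  obtain C where C: "A ** C = mat 1"
    using assms unfolding invertible_def by blast
  obtain K where K: "\<And>X. norm (B ** X ** C) \<le> norm X * K"
    using bounded_linear.bounded[OF bounded_linear_matrix_sandwich] by blast
  have "\<bar>t\<bar> \<le> K" if "t *\<^sub>R (X ** A) = B ** X" "X \<noteq> 0" for t X
  proof -
    have "t *\<^sub>R X = B ** X ** C"
      by (metis C matrix_mul_assoc matrix_mul_rid scalar_matrix_assoc that(1))
    then have "\<bar>t\<bar> * norm X \<le> norm X * K"
      using K[of X] by (metis norm_scaleR)
    with \<open>X \<noteq> 0\<close> show ?thesis
      by (simp add: mult.commute)
  qed
  then show thesis
    using that by blast
qed

lemma powi_bounded_imp_exponent_bounded:
  fixes c :: real
  assumes "\<bar>c\<bar> > 1"
  obtains N where "\<And>n. \<bar>c powi n\<bar> \<le> K \<Longrightarrow> n \<le> int N"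
proof -
  obtain N where N: "K < \<bar>c\<bar> ^ N"
    using real_arch_pow[OF assms] by blast
  have "n \<le> int N" if "\<bar>c powi n\<bar> \<le> K" for n
  proof (rule ccontr)
    assume "\<not> n \<le> int N"
    then have "n = int (nat n)" "N \<le> nat n"
      by auto
    then have "\<bar>c\<bar> ^ N \<le> \<bar>c powi n\<bar>"
      using assms by (metis power_abs power_increasing less_imp_le power_int_of_nat)
    with N that show False
      by simp
  qed
  then show thesis
    using that by blast
qed

lemma has_laurent_expansion_imp_laurent_polynomial:
  assumes "f has_laurent_expansion F" "\<And>n. fls_nth F n \<noteq> 0 \<Longrightarrow> n \<le> N"
  shows "\<forall>\<^sub>F w in at 0. f w = (\<Sum>k\<in>{fls_subdegree F..N}. fls_nth F k * w powi k)"
proof -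
  have "(\<Sum>k\<in>{fls_subdegree F..N}. fls_const (fls_nth F k) * fls_X_intpow k) = F"
  proof (rule fls_eqI)
    fix n
    have "fls_nth (\<Sum>k\<in>{fls_subdegree F..N}. fls_const (fls_nth F k) * fls_X_intpow k) n =
        (\<Sum>k\<in>{fls_subdegree F..N}. if n = k then fls_nth F k else 0)"
      unfolding fls_nth_sum by (intro sum.cong) auto
    also have "\<dots> = (if n \<in> {fls_subdegree F..N} then fls_nth F n else 0)"
      by simp
    also have "\<dots> = fls_nth F n"
      using assms(2)[of n] fls_eq0_below_subdegree[of n F] by auto
    finally show "fls_nth (\<Sum>k\<in>{fls_subdegree F..N}. fls_const (fls_nth F k) * fls_X_intpow k) n =
        fls_nth F n" .
  qed
  moreover have "(\<lambda>w. \<Sum>k\<in>{fls_subdegree F..N}. fls_nth F k * w powi k) has_laurent_expansion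
      (\<Sum>k\<in>{fls_subdegree F..N}. fls_const (fls_nth F k) * fls_X_intpow k)"
    by (intro laurent_expansion_intros)
  ultimately show ?thesis
    using assms(1) unfolding has_laurent_expansion_def
    by (auto elim: eventually_elim2)
qed

lemma laurent_poly_in_ltilde_if_coeffs_bounded:
  assumes "(\<lambda>w. f (cover_of w)) has_laurent_expansion F" "\<And>n. fls_nth F n \<noteq> 0 \<Longrightarrow> n \<le> N"
  shows "laurent_poly_in_ltilde f"
  unfolding laurent_poly_in_ltilde_def
  using has_laurent_expansion_imp_laurent_polynomial[OF assms] by auto

theorem mainTheorem15:
  fixes p :: nat
    and A1 :: "complex ^ 'n1 ^ 'n1"
    and B1 :: "complex ^ 'n2 ^ 'n2"
    and S :: "complex \<times> real \<Rightarrow> complex ^ 'n1 ^ 'n2"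
  assumes "p \<ge> 2"
    and "invertible A1"
    and "invertible B1"
    and "\<And>i j. meromorphic_at_tilde_one (\<lambda>x. S x $ i $ j)"
    and "\<forall>\<^sub>F w in at (ltilde tilde_one).
           S (phi p (cover_of w)) ** A1 = B1 ** S (cover_of w)"
  shows "\<forall>i j. laurent_poly_in_ltilde (\<lambda>x. S x $ i $ j)"
proof -
  define T where "T w = S (cover_of w)" for w
  obtain F where F: "\<And>i j. (\<lambda>w. T w $ i $ j) has_laurent_expansion F i j"
    using meromorphic_at_tilde_one_imp_has_laurent_expansion[OF assms(4)] unfolding T_def by metis
  have "\<forall>\<^sub>F w in at 0. T (of_real (real p) * w) ** A1 = B1 ** T w"
    using assms(5) by (simp add: T_def phi_cover_of)
  then have coeffs: "real p powi n *\<^sub>R ((\<chi> i j. fls_nth (F i j) n) ** A1) =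
      B1 ** (\<chi> i j. fls_nth (F i j) n)" for n
    using assms(1) F by (intro laurent_coeffs_dilation_intertwined) auto
  obtain K where K: "\<And>t X. t *\<^sub>R (X ** A1) = B1 ** X \<Longrightarrow> X \<noteq> 0 \<Longrightarrow> \<bar>t\<bar> \<le> K"
    using scaled_intertwiner_factor_bounded[OF assms(2)] by blast
  obtain N where N: "\<And>n. \<bar>real p powi n\<bar> \<le> K \<Longrightarrow> n \<le> int N"
    using powi_bounded_imp_exponent_bounded[of "real p" K] assms(1) by auto
  have bounded: "n \<le> int N" if "fls_nth (F i j) n \<noteq> 0" for i j n
  proof -
    have "(\<chi> i j. fls_nth (F i j) n) \<noteq> 0"
      using that by (auto simp: vec_eq_iff)
    with K[OF coeffs] N show ?thesis
      by blast
  qed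
  with F show ?thesis
    unfolding T_def by (blast intro: laurent_poly_in_ltilde_if_coeffs_bounded)
qed

end
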